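(* Let $S$ be a rectangular domain and $\xi=(\xi_y)_{y\in S}$ with $\xi_y\ge0$. Let $\bar\eta=\bar\eta(0,\xi)$ be the flow field on $\mathbb{E}(\bar S)$ generated by $\xi$ with zero boundary inflow, and let $H_S(\xi)=\sum_{\ell\in C(S)}w_\eta(\ell)$. Let $G_S(\xi)=\max_{\pi}\sum_{y\in\pi}\xi_y$, the maximum being over all paths $\pi=(y_0,\dots,y_m)$ of points of $S$ such that $y_0$ is the point of $S$ with minimal $t$-coordinate, $y_m$ is the point of $S$ with maximal $t$-coordinate, and $y_{i+1}-y_i\in\{(1,1),(1,-1)\}$ for all $i$. Then $G_S(\xi)=H_S(\xi)$.
   Context: Lattice and edges. $\tilde{\mathbb{Z}}^2=\{(t,x)\in\mathbb{Z}^2:t+x\text{ even}\}$; edges join points at distance $\sqrt2$. For $y=(t,x)$: - $e^\nearrow_y=\langle(t,x),(t+1,x+1)\rangle$, - $e^\searrow_y=\langle(t,x),(t+1,x-1)\rangle$, - $e^\swarrow_y=\langle(t-1,x-1),(t,x)\rangle$, - $e^\nwarrow_y=\langle(t-1,x+1),(t,x)\rangle$. Domains. A rectangular domain is a nonempty set $S=\{(t,x)\in\tilde{\mathbb{Z}}^2: a\le t+x\le b,\ c\le t-x\le d\}$ with even integers $a\le b$, $c\le d$. It has unique points of minimal and of maximal $t$-coordinate. $\bar S$ is $S$ together with all points joined by an edge to a point of $S$; $\partial\bar S=\bar S\setminus S$; $\mathbb{E}(\bar S)$ is the set of edges with at least one endpoint in $S$. Flow field. A flow field is $\eta(e)\ge0$,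 $e\in\mathbb{E}(\bar S)$, with $\eta(e^\nwarrow_y)+\eta(e^\nearrow_y)=\eta(e^\swarrow_y)+\eta(e^\searrow_y)$ for all $y\in S$; its birth field is $\xi_y=\eta(e^\nearrow_y)\wedge\eta(e^\searrow_y)$. Generated flow field $\bar\eta(0,\xi)$. Set $\eta(e)=0$ on every edge $e^\swarrow_y$ or $e^\nwarrow_y$ ($y\in S$) whose other endpoint lies outside $S$. Then, recursively in increasing $t$, for $y\in S$: $$\eta(e^\nearrow_y)=\xi_y+[\eta(e^\swarrow_y)-\eta(e^\nwarrow_y)]^+,\qquad \eta(e^\searrow_y)=\xi_y+[\eta(e^\nwarrow_y)-\eta(e^\swarrow_y)]^+.$$ Association. For $y\in S$, lower edge $f_1\in\{e^\swarrow_y,e^\searrow_y\}$ with $p_1\in(0,\eta(f_1)]$, and upper edge $f_2\in\{e^\nwarrow_y,e^\nearrow_y\}$ with $p_2\in(0,\eta(f_2)]$, write $(f_1,p_1)\sim_y(f_2,p_2)$ exactly when: - Case 1: $f_1=e^\swarrow_y$, $f_2=e^\nwarrow_y$, $p_1\le\eta(f_1)\wedge\eta(f_2)$, $p_2=p_1$; - Case 2: $f_1=e^\searrow_y$, $f_2=e^\nwarrow_y$, $p_2>\eta(e^\swarrow_y)$, $p_1=p_2-\eta(e^\swarrow_y)$; - Case 3: $f_1=e^\swarrow_y$, $f_2=e^\nearrow_y$, $p_1>\eta(e^\nwarrow_y)$, $p_2=p_1-\eta(e^\nwarrow_y)$; - Case 4: $f_1=e^\searrow_y$, $f_2=e^\nearrow_y$,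 $p_i>\eta(f_i)-\xi_y$, $\eta(f_1)-p_1=\eta(f_2)-p_2$. Broken traces. A broken trace is $\ell=(y_0,e_1,y_1,\dots,e_n,y_n)$, $n\ge1$, with $e_i=\langle y_{i-1},y_i\rangle$, $x_i=x_{i-1}+1$, $t_i-t_{i-1}\in\{\pm1\}$. $\ell\subseteq\bar S$ means $y_0,y_n\in\bar S$, $y_1,\dots,y_{n-1}\in S$, all $e_i\in\mathbb{E}(\bar S)$. $C(S)$ is the set of $\ell\subseteq\bar S$ with $y_0,y_n\in\partial\bar S$. Weight. $w_\eta(\ell)$ is the Lebesgue measure of the set of $p_1\in(0,\eta(e_1)]$ admitting $p_i\in(0,\eta(e_i)]$ with $(e_{i-1},p_{i-1})\sim_{y_{i-1}}(e_i,p_i)$ for $i=2,\dots,n$. *)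

theory Defs
  imports "HOL-Analysis.Analysis"
begin

text \<open>Points are pairs (t, x) of integers; the lattice consists of those with t + x even.\<close>
type_synonym point = "int \<times> int"

text \<open>An edge joins points at distance sqrt 2; we represent it as the ordered pair
  (lower-t endpoint, higher-t endpoint).\<close>
type_synonym edge = "point \<times> point"

definition lattice :: "point \<Rightarrow> bool" where
  "lattice p \<longleftrightarrow> even (fst p + snd p)"

definition is_edge :: "edge \<Rightarrow> bool" where
  "is_edge e \<longleftrightarrow> lattice (fst e) \<and> lattice (snd e) \<and>
     fst (snd e) = fst (fst e) + 1 \<and> \<bar>snd (snd e) - snd (fst e)\<bar> = 1"

definition e_ne :: "point \<Rightarrow> edge" where
  "e_ne y = (y, (fst y + 1, snd y + 1))"
definition e_se :: "point \<Rightarrow> edge" where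
  "e_se y = (y, (fst y + 1, snd y - 1))"
definition e_sw :: "point \<Rightarrow> edge" where
  "e_sw y = ((fst y - 1, snd y - 1), y)"
definition e_nw :: "point \<Rightarrow> edge" where
  "e_nw y = ((fst y - 1, snd y + 1), y)"

text \<open>Rectangular domain with parameters a b c d (assumed even, a \<le> b, c \<le> d).\<close>
definition rect :: "int \<Rightarrow> int \<Rightarrow> int \<Rightarrow> int \<Rightarrow> point set" where
  "rect a b c d = {(t, x). even (t + x) \<and> a \<le> t + x \<and> t + x \<le> b \<and> c \<le> t - x \<and> t - x \<le> d}"

definition adjacent :: "point \<Rightarrow> point \<Rightarrow> bool" where
  "adjacent p q \<longleftrightarrow> \<bar>fst p - fst q\<bar> = 1 \<and> \<bar>snd p - snd q\<bar> = 1"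

definition closure_dom :: "point set \<Rightarrow> point set" where
  "closure_dom S = S \<union> {p. lattice p \<and> (\<exists>q\<in>S. adjacent p q)}"

definition bdry_dom :: "point set \<Rightarrow> point set" where
  "bdry_dom S = closure_dom S - S"

definition edges_dom :: "point set \<Rightarrow> edge set" where
  "edges_dom S = {e. is_edge e \<and> (fst e \<in> S \<or> snd e \<in> S)}"

text \<open>Generated flow field with zero boundary inflow: eta satisfies the defining boundary
  conditions and recursion equations of \<open>\<eta>(0,\<xi>)\<close> (these determine eta uniquely on the
  edge set of the closure of S).\<close>
definition gen_flow :: "point set \<Rightarrow> (point \<Rightarrow> real) \<Rightarrow> (edge \<Rightarrow> real) \<Rightarrow> bool" where
  "gen_flow S \<xi> \<eta> \<longleftrightarrow>
     (\<forall>y\<in>S.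
        (fst (e_sw y) \<notin> S \<longrightarrow> \<eta> (e_sw y) = 0) \<and>
        (fst (e_nw y) \<notin> S \<longrightarrow> \<eta> (e_nw y) = 0) \<and>
        \<eta> (e_ne y) = \<xi> y + max 0 (\<eta> (e_sw y) - \<eta> (e_nw y)) \<and>
        \<eta> (e_se y) = \<xi> y + max 0 (\<eta> (e_nw y) - \<eta> (e_sw y)))"

definition assoc :: "(edge \<Rightarrow> real) \<Rightarrow> (point \<Rightarrow> real) \<Rightarrow> point \<Rightarrow> edge \<Rightarrow> real \<Rightarrow> edge \<Rightarrow> real \<Rightarrow> bool" where
  "assoc \<eta> \<xi> y f1 p1 f2 p2 \<longleftrightarrow>
     f1 \<in> {e_sw y, e_se y} \<and> 0 < p1 \<and> p1 \<le> \<eta> f1 \<and>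
     f2 \<in> {e_nw y, e_ne y} \<and> 0 < p2 \<and> p2 \<le> \<eta> f2 \<and>
     ((f1 = e_sw y \<and> f2 = e_nw y \<and> p1 \<le> min (\<eta> f1) (\<eta> f2) \<and> p2 = p1) \<or>
      (f1 = e_se y \<and> f2 = e_nw y \<and> p2 > \<eta> (e_sw y) \<and> p1 = p2 - \<eta> (e_sw y)) \<or>
      (f1 = e_sw y \<and> f2 = e_ne y \<and> p1 > \<eta> (e_nw y) \<and> p2 = p1 - \<eta> (e_nw y)) \<or>
      (f1 = e_se y \<and> f2 = e_ne y \<and> p1 > \<eta> f1 - \<xi> y \<and> p2 > \<eta> f2 - \<xi> y \<and>
         \<eta> f1 - p1 = \<eta> f2 - p2))"

text \<open>A broken trace (y_0,...,y_n), n \<ge> 1, is represented by its list of points;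
  the edges are determined by consecutive points.\<close>
definition broken_trace :: "point list \<Rightarrow> bool" where
  "broken_trace ys \<longleftrightarrow> 2 \<le> length ys \<and>
     (\<forall>i. i + 1 < length ys \<longrightarrow>
        snd (ys ! (i + 1)) = snd (ys ! i) + 1 \<and> \<bar>fst (ys ! (i + 1)) - fst (ys ! i)\<bar> = 1)"

definition tr_edge :: "point \<Rightarrow> point \<Rightarrow> edge" where
  "tr_edge u v = (if fst u < fst v then (u, v) else (v, u))"

text \<open>The i-th edge e_{i+1} = <y_i, y_{i+1}> of the trace (0-based).\<close>
definition trace_edge :: "point list \<Rightarrow> nat \<Rightarrow> edge" where
  "trace_edge ys i = tr_edge (ys ! i) (ys ! (i + 1))"

definition trace_in :: "point set \<Rightarrow> point list \<Rightarrow> bool" where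
  "trace_in S ys \<longleftrightarrow> broken_trace ys \<and>
     hd ys \<in> closure_dom S \<and> last ys \<in> closure_dom S \<and>
     (\<forall>i. 0 < i \<and> i + 1 < length ys \<longrightarrow> ys ! i \<in> S) \<and>
     (\<forall>i. i + 1 < length ys \<longrightarrow> trace_edge ys i \<in> edges_dom S)"

definition crossing_traces :: "point set \<Rightarrow> point list set" where
  "crossing_traces S = {ys. trace_in S ys \<and> hd ys \<in> bdry_dom S \<and> last ys \<in> bdry_dom S}"

definition weight :: "(edge \<Rightarrow> real) \<Rightarrow> (point \<Rightarrow> real) \<Rightarrow> point list \<Rightarrow> real" where
  "weight \<eta> \<xi> ys = measure lborel
     {p. 0 < p \<and> p \<le> \<eta> (trace_edge ys 0) \<and>
        (\<exists>ps :: real list. length ps = length ys - 1 \<and> ps ! 0 = p \<and>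
           (\<forall>i < length ys - 1. 0 < ps ! i \<and> ps ! i \<le> \<eta> (trace_edge ys i)) \<and>
           (\<forall>i. 1 \<le> i \<and> i < length ys - 1 \<longrightarrow>
              assoc \<eta> \<xi> (ys ! i) (trace_edge ys (i - 1)) (ps ! (i - 1)) (trace_edge ys i) (ps ! i)))}"

definition H_S :: "point set \<Rightarrow> (edge \<Rightarrow> real) \<Rightarrow> (point \<Rightarrow> real) \<Rightarrow> real" where
  "H_S S \<eta> \<xi> = (\<Sum>l\<in>crossing_traces S. weight \<eta> \<xi> l)"

definition bottom_pt :: "point set \<Rightarrow> point" where
  "bottom_pt S = (THE y. y \<in> S \<and> (\<forall>z\<in>S. fst y \<le> fst z))"

definition top_pt :: "point set \<Rightarrow> point" where
  "top_pt S = (THE y. y \<in> S \<and> (\<forall>z\<in>S. fst z \<le> fst y))"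

definition up_paths :: "point set \<Rightarrow> point list set" where
  "up_paths S = {\<pi>. \<pi> \<noteq> [] \<and> set \<pi> \<subseteq> S \<and> hd \<pi> = bottom_pt S \<and> last \<pi> = top_pt S \<and>
     (\<forall>i. i + 1 < length \<pi> \<longrightarrow>
        \<pi> ! (i + 1) - \<pi> ! i \<in> {(1, 1), (1, -1)})}"

definition G_S :: "point set \<Rightarrow> (point \<Rightarrow> real) \<Rightarrow> real" where
  "G_S S \<xi> = Max ((\<lambda>\<pi>. sum_list (map \<xi> \<pi>)) ` up_paths S)"

end

theory Submission
  imports Defs
begin

text \<open>
  Structure of the proof.
  \<^item> Last-passage values on the grid of natural numbers: lpp g i j = g i j plus the larger of
    the two predecessor values; this is the dynamic program for maximal directed paths.
  \<^item> Association at a vertex is, for fixed edges, an affine shift of an interval of heights.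
    Hence the set of admissible starting heights of a trace (its start set) is convex, so
    it is an interval and Borel measurable; its measure is the weight of the trace.
  \<^item> For an arbitrary finite domain S with a generated flow (locale flow_domain): traces
    entering along an e_sw edge carry no weight; following a packet is deterministic and
    always possible, and the packet must leave the finite set S.  So the start sets of the
    traces entering through e_se y partition the interval (0, eta(e_se y)], and H_S is the
    total inflow through the e_se edges entering S from outside (H_S_inflow).
  \<^item> On the rectangle (locales rect_grid, rect_flow) we use grid coordinates pt i j.  The
    generated flow is the discrete gradient of lpp, the entry points are pt i jmax, so H_S
    telescopes to lpp imax jmax; directed paths correspond to grid paths, so G_S is
    lpp imax jmax as well.
\<close>

function lpp :: "(nat \<Rightarrow> nat \<Rightarrow> real) \<Rightarrow> nat \<Rightarrow> nat \<Rightarrow> real" where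
  "lpp g i j = g i j + max (if i = 0 then 0 else lpp g (i - 1) j) (if j = 0 then 0 else lpp g i (j - 1))"
  by auto
termination by (relation "Wellfounded.measure (\<lambda>(g, i, j). i + j)") auto

declare lpp.simps [simp del]

definition lpp_left :: "(nat \<Rightarrow> nat \<Rightarrow> real) \<Rightarrow> nat \<Rightarrow> nat \<Rightarrow> real" where
  "lpp_left g i j = (if i = 0 then 0 else lpp g (i - 1) j)"

definition lpp_down :: "(nat \<Rightarrow> nat \<Rightarrow> real) \<Rightarrow> nat \<Rightarrow> nat \<Rightarrow> real" where
  "lpp_down g i j = (if j = 0 then 0 else lpp g i (j - 1))"

lemma lpp_rec: "lpp g i j = g i j + max (lpp_left g i j) (lpp_down g i j)"
  unfolding lpp_left_def lpp_down_def by (rule lpp.simps)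

lemma lpp_nonneg:
  assumes "\<And>i j. 0 \<le> g i j" shows "0 \<le> lpp g i j"
proof (induction "i + j" arbitrary: i j rule: less_induct)
  case less
  have "0 \<le> lpp_down g i j" using less by (simp add: lpp_down_def)
  then show ?case using assms[of i j] by (simp add: lpp_rec[of g i j] max_def)
qed

lemma lpp_telescope: "(\<Sum>i\<le>k. lpp g i n - lpp_left g i n) = lpp g k n"
  by (induction k) (auto simp: lpp_left_def)

lemma edges_distinct: "e_sw y \<noteq> e_se y" "e_nw y \<noteq> e_ne y"
  by (auto simp: e_sw_def e_se_def e_nw_def e_ne_def prod_eq_iff)

lemma assoc_interval:
  "\<exists>lo hi k. \<forall>p1 p2. assoc \<eta> \<xi> y f1 p1 f2 p2 \<longleftrightarrow> lo < p1 \<and> p1 \<le> hi \<and> p2 = p1 + k"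
proof -
  let ?sw = "\<eta> (e_sw y)" and ?se = "\<eta> (e_se y)" and ?nw = "\<eta> (e_nw y)" and ?ne = "\<eta> (e_ne y)"
  note d = edges_distinct[of y]
  consider "f1 = e_sw y" "f2 = e_nw y" | "f1 = e_se y" "f2 = e_nw y" | "f1 = e_sw y" "f2 = e_ne y"
    | "f1 = e_se y" "f2 = e_ne y" | "f1 \<notin> {e_sw y, e_se y} \<or> f2 \<notin> {e_nw y, e_ne y}"
    by blast
  then show ?thesis
  proof cases
    case 1
    show ?thesis by (rule exI[of _ 0], rule exI[of _ "min ?sw ?nw"], rule exI[of _ 0])
      (use 1 d in \<open>auto simp: assoc_def\<close>)
  next
    case 2
    show ?thesis by (rule exI[of _ "max 0 (- ?sw)"], rule exI[of _ "min ?se (?nw - ?sw)"], rule exI[of _ ?sw])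
      (use 2 d in \<open>auto simp: assoc_def\<close>)
  next
    case 3
    show ?thesis by (rule exI[of _ "max 0 ?nw"], rule exI[of _ "min ?sw (?ne + ?nw)"], rule exI[of _ "- ?nw"])
      (use 3 d in \<open>auto simp: assoc_def\<close>)
  next
    case 4
    show ?thesis by (rule exI[of _ "max (max 0 (?se - ?ne)) (?se - \<xi> y)"], rule exI[of _ ?se], rule exI[of _ "?ne - ?se"])
      (use 4 d in \<open>auto simp: assoc_def\<close>)
  next
    case 5
    show ?thesis by (rule exI[of _ 0], rule exI[of _ "-1"], rule exI[of _ 0])
      (use 5 in \<open>auto simp: assoc_def\<close>)
  qed
qed

lemma convex_comb_gt: "(c::real) < x \<Longrightarrow> c < y \<Longrightarrow> 0 \<le> u \<Longrightarrow> 0 \<le> v \<Longrightarrow> u + v = 1 \<Longrightarrow> c < u * x + v * y"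
  using convex_bound_lt[of "-x" "-c" "-y" u v] by (simp add: algebra_simps)

lemma assoc_convex:
  assumes "assoc \<eta> \<xi> y f1 a1 f2 a2" "assoc \<eta> \<xi> y f1 b1 f2 b2" "0 \<le> u" "0 \<le> v" "u + v = 1"
  shows "assoc \<eta> \<xi> y f1 (u * a1 + v * b1) f2 (u * a2 + v * b2)"
proof -
  obtain lo hi k where I: "\<And>p1 p2. assoc \<eta> \<xi> y f1 p1 f2 p2 \<longleftrightarrow> lo < p1 \<and> p1 \<le> hi \<and> p2 = p1 + k"
    using assoc_interval by blast
  have "lo < u * a1 + v * b1" using assms by (auto simp: I intro: convex_comb_gt)
  moreover have "u * a1 + v * b1 \<le> hi" using assms by (auto simp: I intro: convex_bound_le)
  moreover have "u * a2 + v * b2 = u * a1 + v * b1 + (u + v) * k"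
    using assms(1,2) by (simp add: I algebra_simps)
  ultimately show ?thesis using assms(5) by (simp add: I)
qed

text \<open>ps lists the heights of one packet on the successive edges of the trace ys.
  The start set of ys is the set of initial heights of such packets; its measure is the weight.\<close>
definition positions :: "(edge \<Rightarrow> real) \<Rightarrow> (point \<Rightarrow> real) \<Rightarrow> point list \<Rightarrow> real list \<Rightarrow> bool" where
  "positions \<eta> \<xi> ys ps \<longleftrightarrow> length ps = length ys - 1 \<and>
     (\<forall>i < length ps. 0 < ps ! i \<and> ps ! i \<le> \<eta> (trace_edge ys i)) \<and>
     (\<forall>i. 1 \<le> i \<and> i < length ps \<longrightarrow>
        assoc \<eta> \<xi> (ys ! i) (trace_edge ys (i - 1)) (ps ! (i - 1)) (trace_edge ys i) (ps ! i))"

definition start_set :: "(edge \<Rightarrow> real) \<Rightarrow> (point \<Rightarrow> real) \<Rightarrow> point list \<Rightarrow> real set" where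
  "start_set \<eta> \<xi> ys = {p. 0 < p \<and> p \<le> \<eta> (trace_edge ys 0) \<and> (\<exists>ps. positions \<eta> \<xi> ys ps \<and> ps ! 0 = p)}"

lemma positions_length: "positions \<eta> \<xi> ys ps \<Longrightarrow> length ps = length ys - 1"
  by (simp add: positions_def)

lemma positions_bounds:
  "positions \<eta> \<xi> ys ps \<Longrightarrow> i < length ps \<Longrightarrow> 0 < ps ! i \<and> ps ! i \<le> \<eta> (trace_edge ys i)"
  by (simp add: positions_def)

lemma positions_assoc:
  "positions \<eta> \<xi> ys ps \<Longrightarrow> 1 \<le> i \<Longrightarrow> i < length ps \<Longrightarrow>
     assoc \<eta> \<xi> (ys ! i) (trace_edge ys (i - 1)) (ps ! (i - 1)) (trace_edge ys i) (ps ! i)"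
  by (simp add: positions_def)

lemma weight_start_set: "weight \<eta> \<xi> ys = measure lborel (start_set \<eta> \<xi> ys)"
  unfolding weight_def start_set_def positions_def by (rule arg_cong[where f = "measure lborel"]) auto

lemma positions_convex:
  assumes ps: "positions \<eta> \<xi> ys ps" and qs: "positions \<eta> \<xi> ys qs" and u: "0 \<le> u" "0 \<le> v" "u + v = 1"
  shows "positions \<eta> \<xi> ys (map2 (\<lambda>p q. u * p + v * q) ps qs)"
  using assms unfolding positions_def
  by (auto intro!: convex_comb_gt convex_bound_le assoc_convex)

text \<open>Start sets are convex: combine two packets coordinatewise.\<close>
lemma start_set_convex: "convex (start_set \<eta> \<xi> ys)"
proof (rule convexI)
  fix p q u v :: real
  assume p: "p \<in> start_set \<eta> \<xi> ys" and q: "q \<in> start_set \<eta> \<xi> ys" and u: "0 \<le> u" "0 \<le> v" "u + v = 1"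
  obtain ps where ps: "positions \<eta> \<xi> ys ps" "ps ! 0 = p" using p unfolding start_set_def by blast
  obtain qs where qs: "positions \<eta> \<xi> ys qs" "qs ! 0 = q" using q unfolding start_set_def by blast
  let ?rs = "map2 (\<lambda>p q. u * p + v * q) ps qs"
  have "?rs ! 0 = u * p + v * q"
  proof (cases "ps = []")
    case True
    then have "qs = []" "p = q" using ps qs by (auto simp: positions_def)
    moreover have "u * q + v * q = (u + v) * q" by (simp add: algebra_simps)
    ultimately show ?thesis using True ps(2) u(3) by simp
  next
    case False
    then have "qs \<noteq> []" using ps(1) qs(1) by (auto simp: positions_def)
    then show ?thesis using False ps(2) qs(2) by (simp add: nth_Cons' neq_Nil_conv)
  qed
  moreover have "0 < u * p + v * q" "u * p + v * q \<le> \<eta> (trace_edge ys 0)"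
    using p q u unfolding start_set_def by (auto intro: convex_comb_gt convex_bound_le)
  moreover have "positions \<eta> \<xi> ys ?rs" by (rule positions_convex[OF ps(1) qs(1) u])
  ultimately show "u *\<^sub>R p + v *\<^sub>R q \<in> start_set \<eta> \<xi> ys"
    unfolding start_set_def by (auto intro!: exI[of _ ?rs])
qed

lemma start_set_measurable: "start_set \<eta> \<xi> ys \<in> sets lborel"
proof -
  have "is_interval (start_set \<eta> \<xi> ys)" by (simp add: is_interval_convex_1 start_set_convex)
  then show ?thesis using real_interval_borel_measurable by simp
qed

lemma tr_up: "fst v = fst u + 1 \<Longrightarrow> snd v = snd u + 1 \<Longrightarrow> tr_edge u v = e_ne u \<and> tr_edge u v = e_sw v"
  by (cases u; cases v) (auto simp: tr_edge_def e_ne_def e_sw_def)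

lemma tr_down: "fst v = fst u - 1 \<Longrightarrow> snd v = snd u + 1 \<Longrightarrow> tr_edge u v = e_nw u \<and> tr_edge u v = e_se v"
  by (cases u; cases v) (auto simp: tr_edge_def e_nw_def e_se_def)

lemma tr_edge_cases:
  assumes "snd v = snd u + 1" "\<bar>fst v - fst u\<bar> = 1"
  shows "(tr_edge u v = e_ne u \<and> tr_edge u v = e_sw v) \<or> (tr_edge u v = e_nw u \<and> tr_edge u v = e_se v)"
  using assms tr_up[of v u] tr_down[of v u] by (auto simp: abs_if split: if_splits)

text \<open>Since traces move right in x, the edge from u determines the next point.\<close>
lemma tr_edge_determines_end:
  "tr_edge u v = tr_edge u v' \<Longrightarrow> snd v = snd u + 1 \<Longrightarrow> snd v' = snd u + 1 \<Longrightarrow> v = v'"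
  by (auto simp: tr_edge_def prod_eq_iff split: if_splits)

lemma tr_edge_sw: "tr_edge u v = e_sw v \<Longrightarrow> u = fst (e_sw v)"
  by (auto simp: tr_edge_def e_sw_def prod_eq_iff split: if_splits)

lemma tr_edge_se: "tr_edge u v = e_se v \<Longrightarrow> u = snd (e_se v)"
  by (auto simp: tr_edge_def e_se_def prod_eq_iff split: if_splits)

lemma tr_edge_touches: "u \<in> A \<or> v \<in> A \<Longrightarrow> fst (tr_edge u v) \<in> A \<or> snd (tr_edge u v) \<in> A"
  by (auto simp: tr_edge_def)

lemma bt_step: "broken_trace ys \<Longrightarrow> i + 1 < length ys \<Longrightarrow>
    snd (ys ! (i + 1)) = snd (ys ! i) + 1 \<and> \<bar>fst (ys ! (i + 1)) - fst (ys ! i)\<bar> = 1"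
  unfolding broken_trace_def by blast

lemma bt_snd: "broken_trace ys \<Longrightarrow> i < length ys \<Longrightarrow> snd (ys ! i) = snd (ys ! 0) + int i"
  by (induction i) (auto dest: bt_step)

lemma bt_last_snd: "broken_trace ys \<Longrightarrow> snd (last ys) = snd (hd ys) + int (length ys - 1)"
  using bt_snd[of ys "length ys - 1"] by (cases ys) (auto simp: broken_trace_def last_conv_nth)

text \<open>Each step preserves the parity of t + x, so a trace starting on the lattice stays on it.\<close>
lemma bt_lattice:
  assumes bt: "broken_trace ys" and l0: "lattice (ys ! 0)" and i: "i < length ys"
  shows "lattice (ys ! i)"
  using i
proof (induction i)
  case 0 then show ?case using l0 by simp
next
  case (Suc i)
  then have "snd (ys ! Suc i) = snd (ys ! i) + 1" "\<bar>fst (ys ! Suc i) - fst (ys ! i)\<bar> = 1"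
    using bt_step[OF bt, of i] by auto
  then have "fst (ys ! Suc i) + snd (ys ! Suc i) = fst (ys ! i) + snd (ys ! i) \<or>
      fst (ys ! Suc i) + snd (ys ! Suc i) = fst (ys ! i) + snd (ys ! i) + 2"
    by (auto simp: abs_if split: if_splits)
  moreover have "lattice (ys ! i)" using Suc by simp
  ultimately show ?case unfolding lattice_def by presburger
qed

lemma trace_edge_is_edge:
  assumes "broken_trace ys" "lattice (ys ! 0)" "i + 1 < length ys" shows "is_edge (trace_edge ys i)"
  using bt_step[OF assms(1,3)] bt_lattice[OF assms(1,2), of i] bt_lattice[OF assms(1,2), of "i + 1"] assms(3)
  by (auto simp: trace_edge_def tr_edge_def is_edge_def abs_if split: if_splits)

lemma broken_trace_snoc:
  assumes bt: "broken_trace ys" and v: "snd v = snd (last ys) + 1" "\<bar>fst v - fst (last ys)\<bar> = 1"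
  shows "broken_trace (ys @ [v])"
proof -
  have ys: "ys \<noteq> []" using bt by (auto simp: broken_trace_def)
  have "snd ((ys @ [v]) ! (i + 1)) = snd ((ys @ [v]) ! i) + 1 \<and>
        \<bar>fst ((ys @ [v]) ! (i + 1)) - fst ((ys @ [v]) ! i)\<bar> = 1"
    if i: "i + 1 < length (ys @ [v])" for i
  proof (cases "i + 1 < length ys")
    case True then show ?thesis using bt_step[OF bt] by (simp add: nth_append)
  next
    case False
    then have "i = length ys - 1" using i by auto
    then show ?thesis using v ys by (simp add: nth_append last_conv_nth)
  qed
  then show ?thesis using bt unfolding broken_trace_def by auto
qed

lemma trace_edge_append: "i + 1 < length ys \<Longrightarrow> trace_edge (ys @ zs) i = trace_edge ys i"
  by (simp add: trace_edge_def nth_append)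

lemma trace_edge_snoc: "ys \<noteq> [] \<Longrightarrow> trace_edge (ys @ [v]) (length ys - 1) = tr_edge (last ys) v"
  by (simp add: trace_edge_def nth_append last_conv_nth)

lemma snoc_last_indices:
  assumes n: "length ys = Suc (length ps)" "0 < length ps"
  shows "(ys @ [v]) ! length ps = last ys" "(ps @ [p2]) ! (length ps - 1) = last ps"
    "trace_edge (ys @ [v]) (length ps - 1) = trace_edge ys (length ys - 2)"
    "trace_edge (ys @ [v]) (length ps) = tr_edge (last ys) v"
proof -
  have ys: "ys \<noteq> []" using n by auto
  show "(ys @ [v]) ! length ps = last ys" using n(1) ys by (simp add: nth_append last_conv_nth)
  show "(ps @ [p2]) ! (length ps - 1) = last ps" using n(2) by (simp add: nth_append last_conv_nth)
  show "trace_edge (ys @ [v]) (length ps - 1) = trace_edge ys (length ys - 2)"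
    using trace_edge_append[of "length ps - 1" ys "[v]"] n by simp
  show "trace_edge (ys @ [v]) (length ps) = tr_edge (last ys) v" using trace_edge_snoc[OF ys, of v] n(1) by simp
qed

lemma positions_snoc:
  assumes ps: "positions \<eta> \<xi> ys ps" and len: "2 \<le> length ys"
    and A: "assoc \<eta> \<xi> (last ys) (trace_edge ys (length ys - 2)) (last ps) (tr_edge (last ys) v) p2"
  shows "positions \<eta> \<xi> (ys @ [v]) (ps @ [p2])"
proof -
  let ?n = "length ps"
  have "?n = length ys - 1" using ps by (simp add: positions_def)
  then have n: "length ys = Suc ?n" "0 < ?n" using len by linarith+
  have at_end: "(ys @ [v]) ! ?n = last ys" "(ps @ [p2]) ! (?n - 1) = last ps" "(ps @ [p2]) ! ?n = p2"
    "trace_edge (ys @ [v]) (?n - 1) = trace_edge ys (length ys - 2)"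
    "trace_edge (ys @ [v]) ?n = tr_edge (last ys) v"
    using snoc_last_indices[OF n] by auto
  have pos: "0 < p2" "p2 \<le> \<eta> (tr_edge (last ys) v)" using A by (auto simp: assoc_def)
  show ?thesis unfolding positions_def
  proof (intro conjI allI impI)
    show "length (ps @ [p2]) = length (ys @ [v]) - 1" using n by simp
  next
    fix i assume i: "i < length (ps @ [p2])"
    have "0 < (ps @ [p2]) ! i \<and> (ps @ [p2]) ! i \<le> \<eta> (trace_edge (ys @ [v]) i)"
    proof (cases "i < ?n")
      case True
      have "i + 1 < length ys" using True n(1) by simp
      then show ?thesis using True ps trace_edge_append[of i ys "[v]"] by (simp add: positions_def nth_append)
    next
      case False
      then have "i = ?n" using i by simp
      then show ?thesis using pos at_end(3,5) by simp
    qed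
    then show "0 < (ps @ [p2]) ! i" "(ps @ [p2]) ! i \<le> \<eta> (trace_edge (ys @ [v]) i)" by auto
  next
    fix i assume i: "1 \<le> i \<and> i < length (ps @ [p2])"
    show "assoc \<eta> \<xi> ((ys @ [v]) ! i) (trace_edge (ys @ [v]) (i - 1)) ((ps @ [p2]) ! (i - 1))
        (trace_edge (ys @ [v]) i) ((ps @ [p2]) ! i)"
    proof (cases "i < ?n")
      case True
      have "i + 1 < length ys" using True n(1) by simp
      moreover have "i - 1 < ?n" using True by simp
      then have "(ys @ [v]) ! i = ys ! i" "(ps @ [p2]) ! (i - 1) = ps ! (i - 1)" "(ps @ [p2]) ! i = ps ! i"
        using True n(1) by (simp_all add: nth_append)
      ultimately show ?thesis using True ps i trace_edge_append[of i ys "[v]"] trace_edge_append[of "i - 1" ys "[v]"]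
        by (simp add: positions_def)
    next
      case False
      then have "i = ?n" using i by simp
      then show ?thesis using A at_end by simp
    qed
  qed
qed

lemma finite_closure_dom:
  assumes "finite S" shows "finite (closure_dom S)"
proof -
  let ?shift = "\<lambda>(q :: point, dt :: int, dx :: int). (fst q + dt, snd q + dx)"
  have "closure_dom S \<subseteq> S \<union> ?shift ` (S \<times> {-1, 1} \<times> {-1, 1})"
  proof
    fix z assume "z \<in> closure_dom S"
    then consider "z \<in> S" | q where "q \<in> S" "\<bar>fst z - fst q\<bar> = 1" "\<bar>snd z - snd q\<bar> = 1"
      unfolding closure_dom_def adjacent_def by auto
    then show "z \<in> S \<union> ?shift ` (S \<times> {-1, 1} \<times> {-1, 1})"
    proof cases
      case (2 q)
      then have "z = ?shift (q, fst z - fst q, snd z - snd q)"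
        and "(q, fst z - fst q, snd z - snd q) \<in> S \<times> {-1, 1} \<times> {-1, 1}"
        by (auto simp: abs_if split: if_splits)
      then show ?thesis by blast
    qed simp
  qed
  moreover have "finite (S \<union> ?shift ` (S \<times> {-1, 1} \<times> {-1, 1}))" using assms by simp
  ultimately show ?thesis by (rule finite_subset)
qed

locale flow_domain =
  fixes S :: "point set" and \<xi> :: "point \<Rightarrow> real" and \<eta> :: "edge \<Rightarrow> real"
  assumes finite_dom: "finite S"
    and lattice_dom: "\<And>y. y \<in> S \<Longrightarrow> lattice y"
    and xi_nonneg: "\<And>y. y \<in> S \<Longrightarrow> 0 \<le> \<xi> y"
    and generated: "gen_flow S \<xi> \<eta>"
begin

lemma flow_at:
  assumes "y \<in> S"
  shows "fst (e_sw y) \<notin> S \<Longrightarrow> \<eta> (e_sw y) = 0" "fst (e_nw y) \<notin> S \<Longrightarrow> \<eta> (e_nw y) = 0"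
    "\<eta> (e_ne y) = \<xi> y + max 0 (\<eta> (e_sw y) - \<eta> (e_nw y))"
    "\<eta> (e_se y) = \<xi> y + max 0 (\<eta> (e_nw y) - \<eta> (e_sw y))"
  using generated assms unfolding gen_flow_def by blast+

lemma eta_nonneg:
  assumes y: "y \<in> S"
  shows "0 \<le> \<eta> (e_sw y)" "0 \<le> \<eta> (e_nw y)" "0 \<le> \<eta> (e_ne y)" "0 \<le> \<eta> (e_se y)"
proof -
  have out: "0 \<le> \<eta> (e_ne z)" "0 \<le> \<eta> (e_se z)" if "z \<in> S" for z
    using flow_at[OF that] xi_nonneg[OF that] by auto
  show "0 \<le> \<eta> (e_ne y)" "0 \<le> \<eta> (e_se y)" using out[OF y] .
  have "e_sw y = e_ne (fst (e_sw y))" "e_nw y = e_se (fst (e_nw y))"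
    by (simp_all add: e_sw_def e_ne_def e_nw_def e_se_def)
  then show "0 \<le> \<eta> (e_sw y)" "0 \<le> \<eta> (e_nw y)"
    using out flow_at(1,2)[OF y] by (metis order_refl)+
qed

lemma assoc_unique:
  assumes "y \<in> S" "assoc \<eta> \<xi> y f1 p1 f2 p2" "assoc \<eta> \<xi> y f1 p1 f2' p2'"
  shows "f2' = f2 \<and> p2' = p2"
  using assms(2,3) flow_at[OF assms(1)] edges_distinct[of y] unfolding assoc_def by (auto simp: max_def)

text \<open>Association is total: every admissible incoming height has an outgoing partner
  (flow conservation at y makes the four cases exhaustive).\<close>
lemma assoc_exists:
  assumes y: "y \<in> S" and f1: "f1 \<in> {e_sw y, e_se y}" and p1: "0 < p1" "p1 \<le> \<eta> f1"
  shows "\<exists>f2 p2. assoc \<eta> \<xi> y f1 p1 f2 p2"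
proof -
  note flow = flow_at(3,4)[OF y] and nn = eta_nonneg[OF y] and d = edges_distinct[of y]
  have xi: "0 \<le> \<xi> y" using xi_nonneg[OF y] .
  consider "f1 = e_sw y" "p1 \<le> \<eta> (e_nw y)" | "f1 = e_sw y" "\<eta> (e_nw y) < p1"
    | "f1 = e_se y" "p1 + \<eta> (e_sw y) \<le> \<eta> (e_nw y)" | "f1 = e_se y" "\<eta> (e_nw y) < p1 + \<eta> (e_sw y)"
    using f1 by force
  then show ?thesis
  proof cases
    case 1 then show ?thesis using p1
      by (intro exI[of _ "e_nw y"] exI[of _ p1]) (auto simp: assoc_def)
  next
    case 2 then show ?thesis using p1 flow xi
      by (intro exI[of _ "e_ne y"] exI[of _ "p1 - \<eta> (e_nw y)"]) (auto simp: assoc_def max_def)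
  next
    case 3 then show ?thesis using p1 nn d
      by (intro exI[of _ "e_nw y"] exI[of _ "p1 + \<eta> (e_sw y)"]) (auto simp: assoc_def)
  next
    case 4 then show ?thesis using p1 nn d flow xi
      by (intro exI[of _ "e_ne y"] exI[of _ "p1 + \<eta> (e_ne y) - \<eta> (e_se y)"]) (auto simp: assoc_def max_def)
  qed
qed

lemma assoc_successor:
  assumes "y \<in> S" "f1 \<in> {e_sw y, e_se y}" "0 < p1" "p1 \<le> \<eta> f1"
  shows "\<exists>v p2. snd v = snd y + 1 \<and> \<bar>fst v - fst y\<bar> = 1 \<and> assoc \<eta> \<xi> y f1 p1 (tr_edge y v) p2"
proof -
  obtain f2 p2 where A: "assoc \<eta> \<xi> y f1 p1 f2 p2" using assoc_exists[OF assms] by blast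
  then have "f2 \<in> {e_nw y, e_ne y}" by (simp add: assoc_def)
  then consider "f2 = e_ne y" | "f2 = e_nw y" by blast
  then obtain v where "snd v = snd y + 1" "\<bar>fst v - fst y\<bar> = 1" "tr_edge y v = f2"
  proof cases
    case 1
    then show ?thesis using that[of "(fst y + 1, snd y + 1)"] tr_up[of "(fst y + 1, snd y + 1)" y] by auto
  next
    case 2
    then show ?thesis using that[of "(fst y - 1, snd y + 1)"] tr_down[of "(fst y - 1, snd y + 1)" y] by auto
  qed
  then show ?thesis using A by blast
qed

text \<open>The x-coordinates of the closure are bounded, which bounds the length of traces.\<close>
lemma closure_snd_bounds:
  obtains m M where "\<And>z. z \<in> closure_dom S \<Longrightarrow> m \<le> snd z \<and> snd z \<le> M"
proof -
  have "finite (snd ` closure_dom S)" using finite_closure_dom[OF finite_dom] by simp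
  then show ?thesis using that[of "Min (snd ` closure_dom S)" "Max (snd ` closure_dom S)"] by simp
qed

lemma crossing_trace_shape:
  assumes l: "l \<in> crossing_traces S"
  shows "broken_trace l" "3 \<le> length l" "l ! 0 = hd l" "hd l \<notin> S" "last l \<notin> S" "l ! 1 \<in> S"
    "hd l \<in> closure_dom S" "last l \<in> closure_dom S" "\<And>i. 0 < i \<Longrightarrow> i + 1 < length l \<Longrightarrow> l ! i \<in> S"
proof -
  have ti: "trace_in S l" "hd l \<in> bdry_dom S" "last l \<in> bdry_dom S"
    using l unfolding crossing_traces_def by auto
  show bt: "broken_trace l" using ti unfolding trace_in_def by blast
  have len: "2 \<le> length l" using bt unfolding broken_trace_def by blast
  show h0: "l ! 0 = hd l" using len by (cases l) auto
  show hS: "hd l \<notin> S" "last l \<notin> S" "hd l \<in> closure_dom S" "last l \<in> closure_dom S"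
    using ti unfolding bdry_dom_def by auto
  show int: "\<And>i. 0 < i \<Longrightarrow> i + 1 < length l \<Longrightarrow> l ! i \<in> S" using ti unfolding trace_in_def by blast
  have "trace_edge l 0 \<in> edges_dom S" using ti len unfolding trace_in_def by auto
  then have "fst (tr_edge (l ! 0) (l ! 1)) \<in> S \<or> snd (tr_edge (l ! 0) (l ! 1)) \<in> S"
    unfolding edges_dom_def trace_edge_def by auto
  then show l1: "l ! 1 \<in> S" using hS h0 by (auto simp: tr_edge_def split: if_splits)
  have "last l \<noteq> l ! 1" using hS l1 by auto
  moreover have "length l = 2 \<Longrightarrow> last l = l ! 1" by (cases l rule: rev_cases) (auto simp: nth_append)
  ultimately have "length l \<noteq> 2" by auto
  then show "3 \<le> length l" using len by simp
qed

lemma crossing_trace_entry: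
  assumes l: "l \<in> crossing_traces S"
  shows "(trace_edge l 0 = e_sw (l ! 1) \<and> hd l = fst (e_sw (l ! 1))) \<or>
         (trace_edge l 0 = e_se (l ! 1) \<and> hd l = snd (e_se (l ! 1)))"
proof -
  have "snd (l ! 1) = snd (hd l) + 1" "\<bar>fst (l ! 1) - fst (hd l)\<bar> = 1"
    using bt_step[of l 0] crossing_trace_shape[OF l] by auto
  then consider "tr_edge (hd l) (l ! 1) = e_sw (l ! 1)" | "tr_edge (hd l) (l ! 1) = e_se (l ! 1)"
    using tr_edge_cases by blast
  moreover have "trace_edge l 0 = tr_edge (hd l) (l ! 1)"
    using crossing_trace_shape(3)[OF l] by (simp add: trace_edge_def)
  ultimately show ?thesis using tr_edge_sw tr_edge_se by cases auto
qed

lemma start_set_sw_entry: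
  assumes l: "l \<in> crossing_traces S" and entry: "trace_edge l 0 = e_sw (l ! 1)"
  shows "start_set \<eta> \<xi> l = {}"
proof -
  have "hd l = fst (e_sw (l ! 1))" using crossing_trace_entry[OF l] entry edges_distinct by auto
  then have "\<eta> (trace_edge l 0) = 0" using flow_at(1) crossing_trace_shape[OF l] entry by auto
  then show ?thesis unfolding start_set_def by auto
qed

text \<open>There are finitely many crossing traces, so H_S is a finite sum.\<close>
lemma finite_crossing_traces: "finite (crossing_traces S)"
proof -
  obtain m M where bd: "\<And>z. z \<in> closure_dom S \<Longrightarrow> m \<le> snd z \<and> snd z \<le> M"
    using closure_snd_bounds by blast
  let ?N = "nat (M - m) + 1"
  have "crossing_traces S \<subseteq> {xs. set xs \<subseteq> closure_dom S \<and> length xs \<le> ?N}"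
  proof
    fix l assume l: "l \<in> crossing_traces S"
    note sh = crossing_trace_shape[OF l]
    have ne: "l \<noteq> []" using sh(2) by auto
    have "set l \<subseteq> closure_dom S"
    proof
      fix z assume "z \<in> set l"
      then obtain i where i: "i < length l" "z = l ! i" by (auto simp: in_set_conv_nth)
      consider "i = 0" | "i = length l - 1" | "0 < i" "i + 1 < length l" using i by linarith
      then show "z \<in> closure_dom S"
        using i sh ne by cases (auto simp: last_conv_nth closure_dom_def)
    qed
    moreover have "length l \<le> ?N" using bt_last_snd[OF sh(1)] bd[OF sh(7)] bd[OF sh(8)] by linarith
    ultimately show "l \<in> {xs. set xs \<subseteq> closure_dom S \<and> length xs \<le> ?N}" by simp
  qed
  moreover have "finite {xs. set xs \<subseteq> closure_dom S \<and> length xs \<le> ?N}"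
    using finite_lists_length_le[OF finite_closure_dom[OF finite_dom]] .
  ultimately show ?thesis by (rule finite_subset)
qed

lemma trace_step_unique:
  assumes "y \<in> S" "assoc \<eta> \<xi> y f p (tr_edge y v) q" "assoc \<eta> \<xi> y f p (tr_edge y v') q'"
    "snd v = snd y + 1" "snd v' = snd y + 1"
  shows "v = v' \<and> q = q'"
proof -
  have "tr_edge y v' = tr_edge y v" "q' = q" using assoc_unique[OF assms(1-3)] by auto
  then show ?thesis using tr_edge_determines_end[of y v v'] assms(4,5) by auto
qed

lemma start_set_positions:
  assumes "p \<in> start_set \<eta> \<xi> l"
  obtains ps where "positions \<eta> \<xi> l ps" "ps ! 0 = p"
  using assms unfolding start_set_def by blast

lemma crossing_traces_agree:
  assumes l: "l \<in> crossing_traces S" and l': "l' \<in> crossing_traces S"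
    and start: "l ! 0 = l' ! 0" "l ! 1 = l' ! 1"
    and ps: "positions \<eta> \<xi> l ps" "ps ! 0 = p" and ps': "positions \<eta> \<xi> l' ps'" "ps' ! 0 = p"
  shows "k + 1 < length l \<Longrightarrow> k + 1 < length l' \<Longrightarrow>
    l ! k = l' ! k \<and> l ! (k + 1) = l' ! (k + 1) \<and> ps ! k = ps' ! k"
proof (induction k)
  case 0 then show ?case using start ps ps' by simp
next
  case (Suc k)
  note sh = crossing_trace_shape[OF l] and sh' = crossing_trace_shape[OF l']
  have IH: "l ! k = l' ! k" "l ! (k + 1) = l' ! (k + 1)" "ps ! k = ps' ! k" using Suc by auto
  let ?y = "l ! (k + 1)"
  have y: "?y \<in> S" using sh(9) Suc.prems by auto
  have k: "k + 1 < length ps" "k + 1 < length ps'"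
    using Suc.prems positions_length[OF ps(1)] positions_length[OF ps'(1)] by auto
  have out: "trace_edge l (k + 1) = tr_edge ?y (l ! (k + 2))" "trace_edge l' (k + 1) = tr_edge ?y (l' ! (k + 2))"
    using IH by (simp_all add: trace_edge_def numeral_2_eq_2)
  have "trace_edge l k = trace_edge l' k" using IH by (simp add: trace_edge_def)
  then have "assoc \<eta> \<xi> ?y (trace_edge l k) (ps ! k) (tr_edge ?y (l ! (k + 2))) (ps ! (k + 1))"
    and "assoc \<eta> \<xi> ?y (trace_edge l k) (ps ! k) (tr_edge ?y (l' ! (k + 2))) (ps' ! (k + 1))"
    using positions_assoc[OF ps(1), of "k + 1"] positions_assoc[OF ps'(1), of "k + 1"] k IH out by simp_all
  moreover have "snd (l ! (k + 2)) = snd ?y + 1" "snd (l' ! (k + 2)) = snd ?y + 1"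
    using bt_step[OF sh(1), of "k + 1"] bt_step[OF sh'(1), of "k + 1"] Suc.prems IH
    by (auto simp: numeral_2_eq_2)
  ultimately have "l ! (k + 2) = l' ! (k + 2) \<and> ps ! (k + 1) = ps' ! (k + 1)"
    using trace_step_unique[OF y] by blast
  then show ?case using IH by (simp add: numeral_2_eq_2)
qed

text \<open>In particular such traces leave S at the same step, so they have the same length.\<close>
lemma crossing_traces_same_length:
  assumes l: "l \<in> crossing_traces S" and l': "l' \<in> crossing_traces S"
    and start: "l ! 0 = l' ! 0" "l ! 1 = l' ! 1"
    and ps: "positions \<eta> \<xi> l ps" "ps ! 0 = p" and ps': "positions \<eta> \<xi> l' ps'" "ps' ! 0 = p"
  shows "length l = length l'"
proof -
  note agree = crossing_traces_agree[OF assms]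
  have inside_before_exit: False if sh: "3 \<le> length m" "m ! (length m - 1) \<notin> S"
      and sh': "\<And>i. 0 < i \<Longrightarrow> i + 1 < length m' \<Longrightarrow> m' ! i \<in> S"
      and shorter: "length m < length m'" and same: "m ! (length m - 1) = m' ! (length m - 1)" for m m' :: "point list"
    using sh'[of "length m - 1"] sh shorter same by auto
  note sh = crossing_trace_shape[OF l] and sh' = crossing_trace_shape[OF l']
  have "l \<noteq> []" "l' \<noteq> []" using sh(2) sh'(2) by auto
  then have exit: "l ! (length l - 1) \<notin> S" "l' ! (length l' - 1) \<notin> S"
    using sh(5) sh'(5) by (simp_all add: last_conv_nth)
  show ?thesis
  proof (rule ccontr)
    assume "length l \<noteq> length l'"
    then consider "length l < length l'" | "length l' < length l" by linarith
    then show False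
    proof cases
      case 1
      then have "l ! (length l - 1) = l' ! (length l - 1)" using agree[of "length l - 2"] sh(2)
        by (simp add: numeral_2_eq_2 Suc_diff_Suc)
      then show False using inside_before_exit[OF sh(2) exit(1) sh'(9) 1] by simp
    next
      case 2
      then have "l' ! (length l' - 1) = l ! (length l' - 1)" using agree[of "length l' - 2"] sh'(2)
        by (simp add: numeral_2_eq_2 Suc_diff_Suc)
      then show False using inside_before_exit[OF sh'(2) exit(2) sh(9) 2] by simp
    qed
  qed
qed

text \<open>Hence the start sets of distinct crossing traces with the same first edge are disjoint.\<close>
lemma crossing_trace_unique:
  assumes l: "l \<in> crossing_traces S" and l': "l' \<in> crossing_traces S"
    and start: "hd l = hd l'" "l ! 1 = l' ! 1"
    and p: "p \<in> start_set \<eta> \<xi> l" "p \<in> start_set \<eta> \<xi> l'"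
  shows "l = l'"
proof -
  note sh = crossing_trace_shape[OF l] and sh' = crossing_trace_shape[OF l']
  obtain ps where ps: "positions \<eta> \<xi> l ps" "ps ! 0 = p" by (rule start_set_positions[OF p(1)])
  obtain ps' where ps': "positions \<eta> \<xi> l' ps'" "ps' ! 0 = p" by (rule start_set_positions[OF p(2)])
  have start0: "l ! 0 = l' ! 0" using sh(3) sh'(3) start(1) by simp
  note agree = crossing_traces_agree[OF l l' start0 start(2) ps ps']
  have len: "length l = length l'" using crossing_traces_same_length[OF l l' start0 start(2) ps ps'] .
  show ?thesis
  proof (rule nth_equalityI)
    fix i assume i: "i < length l"
    show "l ! i = l' ! i"
    proof (cases "i + 1 < length l")
      case True then show ?thesis using agree[of i] len by simp
    next
      case False
      then have "i = (length l - 2) + 1" using i sh(2) by auto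
      then show ?thesis using agree[of "length l - 2"] len sh(2) by simp
    qed
  qed (rule len)
qed

lemma entry_in_closure: "y \<in> S \<Longrightarrow> snd (e_se y) \<in> closure_dom S"
  using lattice_dom[of y] unfolding closure_dom_def adjacent_def lattice_def e_se_def by force

definition partial_trace :: "point \<Rightarrow> point \<Rightarrow> real \<Rightarrow> point list \<Rightarrow> real list \<Rightarrow> bool" where
  "partial_trace h y p ys ps \<longleftrightarrow> broken_trace ys \<and> ys ! 0 = h \<and> ys ! 1 = y \<and>
     (\<forall>i. 0 < i \<and> i + 1 < length ys \<longrightarrow> ys ! i \<in> S) \<and> positions \<eta> \<xi> ys ps \<and> ps ! 0 = p"

lemma partial_trace_ends:
  assumes "partial_trace h y p ys ps" shows "2 \<le> length ys" "hd ys = h" "ys ! 1 = y"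
proof -
  show len: "2 \<le> length ys" using assms by (simp add: partial_trace_def broken_trace_def)
  then have "ys \<noteq> []" by auto
  then show "hd ys = h" "ys ! 1 = y" using assms hd_conv_nth[of ys] by (auto simp: partial_trace_def)
qed

lemma partial_trace_extend:
  assumes P: "partial_trace h y p ys ps" and z: "last ys \<in> S"
  shows "\<exists>v q. partial_trace h y p (ys @ [v]) (ps @ [q])"
proof -
  let ?n = "length ys" and ?z = "last ys" and ?u = "ys ! (length ys - 2)"
  have bt: "broken_trace ys" and ps: "positions \<eta> \<xi> ys ps" using P by (auto simp: partial_trace_def)
  have len: "2 \<le> ?n" and ne: "ys \<noteq> []" using bt by (auto simp: broken_trace_def)
  have "?n - 2 + 1 = ?n - 1" using len by simp
  then have z_nth: "?z = ys ! (?n - 2 + 1)" using ne by (simp add: last_conv_nth)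
  have "snd ?z = snd ?u + 1" "\<bar>fst ?z - fst ?u\<bar> = 1" using bt_step[OF bt, of "?n - 2"] len z_nth by auto
  then have "tr_edge ?u ?z \<in> {e_sw ?z, e_se ?z}" using tr_edge_cases by blast
  moreover have "trace_edge ys (?n - 2) = tr_edge ?u ?z" using z_nth by (simp add: trace_edge_def)
  ultimately have f1: "trace_edge ys (?n - 2) \<in> {e_sw ?z, e_se ?z}" by simp
  have "ps \<noteq> []" "length ps - 1 = ?n - 2" "?n - 2 < length ps"
    using positions_length[OF ps] len by auto
  then have "last ps = ps ! (?n - 2)" "?n - 2 < length ps" by (simp_all add: last_conv_nth)
  then have "0 < last ps" "last ps \<le> \<eta> (trace_edge ys (?n - 2))" using positions_bounds[OF ps] by auto
  then obtain v q where v: "snd v = snd ?z + 1" "\<bar>fst v - fst ?z\<bar> = 1"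
      and A: "assoc \<eta> \<xi> ?z (trace_edge ys (?n - 2)) (last ps) (tr_edge ?z v) q"
    using assoc_successor[OF z f1] by blast
  have "partial_trace h y p (ys @ [v]) (ps @ [q])"
    unfolding partial_trace_def
  proof (intro conjI allI impI)
    show "broken_trace (ys @ [v])" using broken_trace_snoc[OF bt v] .
    show "positions \<eta> \<xi> (ys @ [v]) (ps @ [q])" using positions_snoc[OF ps len A] .
    show "(ys @ [v]) ! 0 = h" "(ys @ [v]) ! 1 = y" "(ps @ [q]) ! 0 = p"
      using P len positions_length[OF ps] by (auto simp: partial_trace_def nth_append)
    fix i assume i: "0 < i \<and> i + 1 < length (ys @ [v])"
    show "(ys @ [v]) ! i \<in> S"
    proof (cases "i + 1 < ?n")
      case True then show ?thesis using P i by (simp add: partial_trace_def nth_append)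
    next
      case False
      moreover have "i < ?n" using i by simp
      ultimately have "i = ?n - 1" by linarith
      then show ?thesis using z ne by (simp add: nth_append last_conv_nth)
    qed
  qed
  then show ?thesis by blast
qed

lemma partial_trace_exit:
  assumes y: "y \<in> S" and h: "h = snd (e_se y)" and p: "0 < p" "p \<le> \<eta> (e_se y)"
  shows "\<exists>ys ps. partial_trace h y p ys ps \<and> last ys \<notin> S"
proof -
  have hy: "fst y = fst h - 1" "snd y = snd h + 1" using h by (simp_all add: e_se_def)
  have base: "partial_trace h y p [h, y] [p]"
    using hy p tr_down[OF hy] unfolding partial_trace_def broken_trace_def positions_def trace_edge_def
    by (auto simp: less_Suc_eq)
  have long: "\<exists>ys ps. partial_trace h y p ys ps \<and> (last ys \<notin> S \<or> k + 2 \<le> length ys)" for k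
  proof (induction k)
    case 0 then show ?case using base by force
  next
    case (Suc k)
    then obtain ys ps where P: "partial_trace h y p ys ps" and D: "last ys \<notin> S \<or> k + 2 \<le> length ys"
      by blast
    show ?case
    proof (cases "last ys \<in> S")
      case True
      then obtain v q where "partial_trace h y p (ys @ [v]) (ps @ [q])" using partial_trace_extend[OF P] by blast
      then show ?thesis using D True by fastforce
    qed (use P in blast)
  qed
  obtain m M where bd: "\<And>z. z \<in> closure_dom S \<Longrightarrow> m \<le> snd z \<and> snd z \<le> M"
    using closure_snd_bounds by blast
  obtain ys ps where P: "partial_trace h y p ys ps" and D: "last ys \<notin> S \<or> nat (M - m) + 2 \<le> length ys"
    using long by blast
  have "last ys \<notin> S"
  proof
    assume last: "last ys \<in> S"
    have bt: "broken_trace ys" using P by (simp add: partial_trace_def)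
    have hd: "hd ys = h" using partial_trace_ends[OF P] by simp
    have "h \<in> closure_dom S" using entry_in_closure[OF y] h by simp
    then show False using bt_last_snd[OF bt] hd bd[of h] bd[of "last ys"] last D
      by (auto simp: closure_dom_def)
  qed
  then show ?thesis using P by blast
qed

lemma partial_trace_crossing:
  assumes P: "partial_trace h y p ys ps" and y: "y \<in> S" and h: "h = snd (e_se y)" "h \<notin> S"
    and exit: "last ys \<notin> S"
  shows "ys \<in> crossing_traces S" "p \<in> start_set \<eta> \<xi> ys"
proof -
  have bt: "broken_trace ys" and h0: "ys ! 0 = h" and y1: "ys ! 1 = y"
    and int: "\<And>i. 0 < i \<Longrightarrow> i + 1 < length ys \<Longrightarrow> ys ! i \<in> S"
    and ps: "positions \<eta> \<xi> ys ps" "ps ! 0 = p"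
    using P by (auto simp: partial_trace_def)
  have ne: "ys \<noteq> []" and hd: "hd ys = h" using partial_trace_ends[OF P] by auto
  have lat: "lattice (ys ! 0)" using entry_in_closure[OF y] h(2) h0 h(1) by (simp add: closure_dom_def)
  have len: "3 \<le> length ys"
  proof (rule ccontr)
    assume "\<not> 3 \<le> length ys"
    then have "length ys = 2" using bt by (simp add: broken_trace_def)
    then show False using exit y y1 ne by (simp add: last_conv_nth)
  qed
  let ?u = "ys ! (length ys - 2)"
  have "length ys - 2 + 1 = length ys - 1" using len by simp
  then have last_nth: "last ys = ys ! (length ys - 2 + 1)" using ne by (simp add: last_conv_nth)
  have "h \<in> closure_dom S" using entry_in_closure[OF y] h by simp
  moreover have "last ys \<in> closure_dom S"
  proof -
    have "?u \<in> S" using int[of "length ys - 2"] len by simp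
    moreover have "lattice (last ys)" using bt_lattice[OF bt lat, of "length ys - 1"] ne by (simp add: last_conv_nth)
    ultimately show ?thesis using bt_step[OF bt, of "length ys - 2"] len last_nth
      unfolding closure_dom_def adjacent_def by force
  qed
  moreover have "trace_edge ys i \<in> edges_dom S" if "i + 1 < length ys" for i
  proof -
    have "ys ! i \<in> S \<or> ys ! (i + 1) \<in> S" using int[of i] y y1 that by (cases "i = 0") auto
    then show ?thesis using trace_edge_is_edge[OF bt lat that] tr_edge_touches
      unfolding edges_dom_def trace_edge_def by auto
  qed
  ultimately show "ys \<in> crossing_traces S"
    using bt hd h exit int unfolding crossing_traces_def trace_in_def bdry_dom_def by auto
  show "p \<in> start_set \<eta> \<xi> ys"
    using ps positions_bounds[OF ps(1), of 0] positions_length[OF ps(1)] len unfolding start_set_def by auto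
qed

text \<open>The crossing traces entering S along e_se y split the interval (0, eta(e_se y)]
  into disjoint start sets; hence their weights add up to the inflow through that edge.\<close>
lemma inflow_partition:
  assumes y: "y \<in> S" and h: "h = snd (e_se y)" "h \<notin> S"
  shows "(\<Sum>l\<in>{l \<in> crossing_traces S. l ! 1 = y \<and> hd l = h}. weight \<eta> \<xi> l) = \<eta> (e_se y)"
proof -
  let ?T = "{l \<in> crossing_traces S. l ! 1 = y \<and> hd l = h}"
  have fin: "finite ?T" using finite_crossing_traces by simp
  have sub: "start_set \<eta> \<xi> l \<subseteq> {0<..\<eta> (e_se y)}" if "l \<in> ?T" for l
  proof -
    have "trace_edge l 0 = e_se y"
      using crossing_trace_entry[of l] that h tr_edge_sw by (auto simp: e_sw_def e_se_def)
    then show ?thesis unfolding start_set_def by auto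
  qed
  have disj: "disjoint_family_on (start_set \<eta> \<xi>) ?T"
    unfolding disjoint_family_on_def
  proof (intro ballI impI)
    fix l l' assume "l \<in> ?T" "l' \<in> ?T" "l \<noteq> l'"
    then show "start_set \<eta> \<xi> l \<inter> start_set \<eta> \<xi> l' = {}" using crossing_trace_unique[of l l'] by auto
  qed
  have cover: "{0<..\<eta> (e_se y)} \<subseteq> (\<Union>l\<in>?T. start_set \<eta> \<xi> l)"
  proof
    fix p assume "p \<in> {0<..\<eta> (e_se y)}"
    then have "0 < p" "p \<le> \<eta> (e_se y)" by auto
    then obtain ys ps where P: "partial_trace h y p ys ps" and exit: "last ys \<notin> S"
      using partial_trace_exit[OF y h(1)] by blast
    have "hd ys = h" "ys ! 1 = y" using partial_trace_ends[OF P] by auto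
    then show "p \<in> (\<Union>l\<in>?T. start_set \<eta> \<xi> l)" using partial_trace_crossing[OF P y h exit] by blast
  qed
  have bounded: "emeasure lborel (start_set \<eta> \<xi> l) \<noteq> \<infinity>" if "l \<in> ?T" for l
    using emeasure_bounded_finite[OF bounded_subset[OF bounded_Ioc sub[OF that]]] by simp
  have "(\<Sum>l\<in>?T. weight \<eta> \<xi> l) = (\<Sum>l\<in>?T. measure lborel (start_set \<eta> \<xi> l))"
    by (simp add: weight_start_set)
  also have "\<dots> = measure lborel (\<Union>l\<in>?T. start_set \<eta> \<xi> l)"
    using fin disj bounded start_set_measurable by (intro measure_finite_Union[symmetric]) auto
  also have "(\<Union>l\<in>?T. start_set \<eta> \<xi> l) = {0<..\<eta> (e_se y)}" using sub cover by blast
  finally show ?thesis using eta_nonneg(4)[OF y] by simp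
qed

theorem H_S_inflow:
  "H_S S \<eta> \<xi> = (\<Sum>y\<in>{y \<in> S. snd (e_se y) \<notin> S}. \<eta> (e_se y))"
proof -
  let ?T = "{l \<in> crossing_traces S. hd l = snd (e_se (l ! 1))}"
  let ?E = "{y \<in> S. snd (e_se y) \<notin> S}"
  have "H_S S \<eta> \<xi> = (\<Sum>l\<in>?T. weight \<eta> \<xi> l)"
    unfolding H_S_def
  proof (rule sum.mono_neutral_right)
    show "\<forall>l\<in>crossing_traces S - ?T. weight \<eta> \<xi> l = 0"
    proof
      fix l assume l: "l \<in> crossing_traces S - ?T"
      then have "trace_edge l 0 = e_sw (l ! 1)" using crossing_trace_entry[of l] by auto
      then show "weight \<eta> \<xi> l = 0" using start_set_sw_entry l by (simp add: weight_start_set)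
    qed
  qed (use finite_crossing_traces in auto)
  also have "\<dots> = (\<Sum>y\<in>?E. \<Sum>l\<in>{l \<in> ?T. l ! 1 = y}. weight \<eta> \<xi> l)"
  proof (rule sum.group[symmetric])
    show "(\<lambda>l. l ! 1) ` ?T \<subseteq> ?E"
    proof
      fix y assume "y \<in> (\<lambda>l. l ! 1) ` ?T"
      then obtain l where "l \<in> ?T" "y = l ! 1" by blast
      then show "y \<in> ?E" using crossing_trace_shape(4,6)[of l] by auto
    qed
  qed (use finite_crossing_traces finite_dom in auto)
  also have "\<dots> = (\<Sum>y\<in>?E. \<eta> (e_se y))"
  proof (rule sum.cong)
    fix y assume y: "y \<in> ?E"
    have "{l \<in> ?T. l ! 1 = y} = {l \<in> crossing_traces S. l ! 1 = y \<and> hd l = snd (e_se y)}" by auto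
    then show "(\<Sum>l\<in>{l \<in> ?T. l ! 1 = y}. weight \<eta> \<xi> l) = \<eta> (e_se y)"
      using inflow_partition[of y] y by simp
  qed simp
  finally show ?thesis .
qed

end

definition up_step :: "point \<Rightarrow> point \<Rightarrow> bool" where
  "up_step u v \<longleftrightarrow> v - u \<in> {(1, 1), (1, -1)}"

lemma up_paths_successively:
  "up_paths S = {\<pi>. \<pi> \<noteq> [] \<and> set \<pi> \<subseteq> S \<and> hd \<pi> = bottom_pt S \<and> last \<pi> = top_pt S \<and> successively up_step \<pi>}"
  unfolding up_paths_def successively_conv_nth up_step_def by auto

text \<open>Grid coordinates for the rectangle: pt i j has t + x = a + 2i and t - x = c + 2j, so that
  i counts e_ne steps and j counts e_se steps from the bottom point pt 0 0.\<close>
locale rect_grid =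
  fixes a b c d :: int
  assumes even_a: "even a" and even_b: "even b" and even_c: "even c" and even_d: "even d"
    and a_le_b: "a \<le> b" and c_le_d: "c \<le> d"
begin

definition pt :: "nat \<Rightarrow> nat \<Rightarrow> point" where
  "pt i j = ((a + c) div 2 + int i + int j, (a - c) div 2 + int i - int j)"

definition imax :: nat where "imax = nat ((b - a) div 2)"
definition jmax :: nat where "jmax = nat ((d - c) div 2)"

lemma pt_coords: "fst (pt i j) + snd (pt i j) = a + 2 * int i" "fst (pt i j) - snd (pt i j) = c + 2 * int j"
  using even_a even_c unfolding pt_def by auto

lemma pt_in_rect: "pt i j \<in> rect a b c d \<longleftrightarrow> i \<le> imax \<and> j \<le> jmax"
proof -
  obtain k l where "b - a = 2 * k" "d - c = 2 * l" using even_a even_b even_c even_d by (metis dvd_diff evenE)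
  moreover have "even (fst (pt i j) + snd (pt i j))" using pt_coords(1) even_a by simp
  ultimately show ?thesis using pt_coords[of i j] a_le_b c_le_d
    unfolding rect_def imax_def jmax_def by (cases "pt i j") auto
qed

lemma pt_inj: "pt i j = pt i' j' \<longleftrightarrow> i = i' \<and> j = j'"
  using pt_coords[of i j] pt_coords[of i' j'] by auto

lemma rect_pt:
  assumes "z \<in> rect a b c d" obtains i j where "z = pt i j" "i \<le> imax" "j \<le> jmax"
proof -
  obtain t x where z: "z = (t, x)" by force
  have h: "even (t + x)" "a \<le> t + x" "c \<le> t - x" using assms z unfolding rect_def by auto
  define i where "i = nat ((t + x - a) div 2)"
  define j where "j = nat ((t - x - c) div 2)"
  have "fst (pt i j) + snd (pt i j) = t + x" "fst (pt i j) - snd (pt i j) = t - x"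
    unfolding pt_coords i_def j_def using h even_a even_c by auto
  then have "pt i j = z" using z by (cases "pt i j") auto
  then show ?thesis using that assms pt_in_rect by blast
qed

lemma fst_pt: "fst (pt i j) = (a + c) div 2 + int i + int j"
  unfolding pt_def by simp

lemma pt_Suc: "pt (Suc i) j = snd (e_ne (pt i j))" "pt i (Suc j) = snd (e_se (pt i j))"
  unfolding pt_def e_ne_def e_se_def by auto

lemma pt_incoming: "e_sw (pt (Suc i) j) = e_ne (pt i j)" "e_nw (pt i (Suc j)) = e_se (pt i j)"
  unfolding pt_def e_sw_def e_ne_def e_nw_def e_se_def by auto

lemma pt_boundary: "fst (e_sw (pt 0 j)) \<notin> rect a b c d" "fst (e_nw (pt i 0)) \<notin> rect a b c d"
  using pt_coords[of 0 j] pt_coords[of i 0] unfolding e_sw_def e_nw_def rect_def by auto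

lemma up_step_pt: "up_step (pt i j) z \<longleftrightarrow> z = pt (Suc i) j \<or> z = pt i (Suc j)"
proof -
  have "pt (Suc i) j = (1, 1) + pt i j" "pt i (Suc j) = (1, -1) + pt i j" by (simp_all add: pt_def)
  then show ?thesis unfolding up_step_def by (auto simp: diff_eq_eq)
qed

lemma fst_pt_bounds: "z \<in> rect a b c d \<Longrightarrow> fst (pt 0 0) \<le> fst z \<and> fst z \<le> fst (pt imax jmax)"
  by (erule rect_pt) (simp add: fst_pt)

lemma bottom_rect: "bottom_pt (rect a b c d) = pt 0 0"
  unfolding bottom_pt_def
proof (rule the_equality)
  show "pt 0 0 \<in> rect a b c d \<and> (\<forall>z\<in>rect a b c d. fst (pt 0 0) \<le> fst z)"
    using pt_in_rect[of 0 0] fst_pt_bounds by simp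
next
  fix y assume y: "y \<in> rect a b c d \<and> (\<forall>z\<in>rect a b c d. fst y \<le> fst z)"
  then obtain i j where "y = pt i j" using rect_pt by blast
  moreover have "fst y \<le> fst (pt 0 0)" using y pt_in_rect[of 0 0] by auto
  ultimately show "y = pt 0 0" using fst_pt pt_inj by auto
qed

lemma top_rect: "top_pt (rect a b c d) = pt imax jmax"
  unfolding top_pt_def
proof (rule the_equality)
  show "pt imax jmax \<in> rect a b c d \<and> (\<forall>z\<in>rect a b c d. fst z \<le> fst (pt imax jmax))"
    using pt_in_rect[of imax jmax] fst_pt_bounds by simp
next
  fix y assume y: "y \<in> rect a b c d \<and> (\<forall>z\<in>rect a b c d. fst z \<le> fst y)"
  then obtain i j where "y = pt i j" "i \<le> imax" "j \<le> jmax" using rect_pt by blast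
  moreover have "fst (pt imax jmax) \<le> fst y" using y pt_in_rect[of imax jmax] by auto
  ultimately show "y = pt imax jmax" using fst_pt pt_inj by auto
qed

lemma rect_grid_image: "rect a b c d = (\<lambda>(i, j). pt i j) ` ({..imax} \<times> {..jmax})"
proof
  show "rect a b c d \<subseteq> (\<lambda>(i, j). pt i j) ` ({..imax} \<times> {..jmax})"
  proof
    fix z assume "z \<in> rect a b c d"
    then obtain i j where "z = pt i j" "i \<le> imax" "j \<le> jmax" by (rule rect_pt)
    then show "z \<in> (\<lambda>(i, j). pt i j) ` ({..imax} \<times> {..jmax})" by (intro image_eqI[of _ _ "(i, j)"]) auto
  qed
qed (auto simp: pt_in_rect)

lemma finite_rect: "finite (rect a b c d)"
  by (simp add: rect_grid_image)

lemma lattice_rect: "y \<in> rect a b c d \<Longrightarrow> lattice y"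
  unfolding rect_def lattice_def by auto

lemma se_exits_rect: "{y \<in> rect a b c d. snd (e_se y) \<notin> rect a b c d} = (\<lambda>i. pt i jmax) ` {..imax}"
proof -
  have exit: "snd (e_se (pt i j)) \<notin> rect a b c d \<longleftrightarrow> jmax \<le> j" if "i \<le> imax" for i j
    using that pt_in_rect[of i "Suc j"] by (auto simp flip: pt_Suc)
  show ?thesis
  proof
    show "{y \<in> rect a b c d. snd (e_se y) \<notin> rect a b c d} \<subseteq> (\<lambda>i. pt i jmax) ` {..imax}"
    proof
      fix y assume y: "y \<in> {y \<in> rect a b c d. snd (e_se y) \<notin> rect a b c d}"
      then obtain i j where ij: "y = pt i j" "i \<le> imax" "j \<le> jmax" using rect_pt by blast
      then have "j = jmax" using y exit by auto
      then show "y \<in> (\<lambda>i. pt i jmax) ` {..imax}" using ij by auto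
    qed
  next
    show "(\<lambda>i. pt i jmax) ` {..imax} \<subseteq> {y \<in> rect a b c d. snd (e_se y) \<notin> rect a b c d}"
      using pt_in_rect exit[of _ jmax] by auto
  qed
qed

end

locale rect_flow = rect_grid +
  fixes \<xi> :: "point \<Rightarrow> real" and \<eta> :: "edge \<Rightarrow> real"
  assumes xi_nonneg_rect: "\<forall>y\<in>rect a b c d. 0 \<le> \<xi> y"
    and generated_rect: "gen_flow (rect a b c d) \<xi> \<eta>"
begin

sublocale flow_domain "rect a b c d" \<xi> \<eta>
  using finite_rect lattice_rect xi_nonneg_rect generated_rect by unfold_locales auto

definition g :: "nat \<Rightarrow> nat \<Rightarrow> real" where
  "g i j = (if i \<le> imax \<and> j \<le> jmax then \<xi> (pt i j) else 0)"

lemma g_nonneg: "0 \<le> g i j"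
  unfolding g_def using xi_nonneg pt_in_rect by auto

lemma g_pt: "i \<le> imax \<Longrightarrow> j \<le> jmax \<Longrightarrow> g i j = \<xi> (pt i j)"
  by (simp add: g_def)

lemma flow_is_lpp_gradient:
  "i \<le> imax \<Longrightarrow> j \<le> jmax \<Longrightarrow>
    \<eta> (e_ne (pt i j)) = lpp g i j - lpp_down g i j \<and> \<eta> (e_se (pt i j)) = lpp g i j - lpp_left g i j"
proof (induction "i + j" arbitrary: i j rule: less_induct)
  case less
  let ?y = "pt i j" and ?D = "if i = 0 \<or> j = 0 then 0 else lpp g (i - 1) (j - 1)"
  have y: "?y \<in> rect a b c d" using less pt_in_rect by auto
  have sw: "\<eta> (e_sw ?y) = lpp_left g i j - ?D"
  proof (cases i)
    case 0 then show ?thesis using flow_at(1)[OF y] pt_boundary(1) by (simp add: lpp_left_def)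
  next
    case (Suc i')
    then have "\<eta> (e_ne (pt i' j)) = lpp g i' j - lpp_down g i' j" using less.hyps[of i' j] less.prems by simp
    then show ?thesis using Suc pt_incoming(1)[of i' j] by (simp add: lpp_left_def lpp_down_def)
  qed
  have nw: "\<eta> (e_nw ?y) = lpp_down g i j - ?D"
  proof (cases j)
    case 0 then show ?thesis using flow_at(2)[OF y] pt_boundary(2) by (simp add: lpp_down_def)
  next
    case (Suc j')
    then have "\<eta> (e_se (pt i j')) = lpp g i j' - lpp_left g i j'" using less.hyps[of i j'] less.prems by simp
    then show ?thesis using Suc pt_incoming(2)[of i j'] by (simp add: lpp_left_def lpp_down_def)
  qed
  show ?case using flow_at(3,4)[OF y] sw nw lpp_rec[of g i j] g_pt[OF less.prems] by (auto simp: max_def)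
qed

lemma up_path_bound:
  "\<pi> \<noteq> [] \<Longrightarrow> set \<pi> \<subseteq> rect a b c d \<Longrightarrow> hd \<pi> = pt 0 0 \<Longrightarrow> successively up_step \<pi> \<Longrightarrow>
    last \<pi> = pt i j \<Longrightarrow> sum_list (map \<xi> \<pi>) \<le> lpp g i j \<and> length \<pi> = i + j + 1"
proof (induction \<pi> arbitrary: i j rule: rev_induct)
  case (snoc z xs)
  have z: "z = pt i j" "z \<in> rect a b c d" using snoc.prems by auto
  then have ij: "i \<le> imax" "j \<le> jmax" using pt_in_rect by auto
  show ?case
  proof (cases "xs = []")
    case True
    then have "i = 0" "j = 0" using snoc.prems pt_inj by auto
    then show ?thesis using True z ij by (simp add: g_pt lpp_rec[of g 0 0] lpp_left_def lpp_down_def)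
  next
    case False
    have steps: "successively up_step xs" "up_step (last xs) z"
      using snoc.prems(4) False by (auto simp: successively_append_iff)
    have "last xs \<in> rect a b c d" using snoc.prems(2) False by auto
    then obtain i' j' where w: "last xs = pt i' j'" by (rule rect_pt)
    have IH: "sum_list (map \<xi> xs) \<le> lpp g i' j' \<and> length xs = i' + j' + 1"
      using snoc.IH[OF False _ _ steps(1) w] snoc.prems(2,3) False by auto
    from steps(2) have pred: "(i = Suc i' \<and> j = j') \<or> (i = i' \<and> j = Suc j')" using w z up_step_pt pt_inj by auto
    then have "lpp g i' j' + g i j \<le> lpp g i j"
      using lpp_rec[of g i j] by (auto simp: lpp_left_def lpp_down_def)
    then show ?thesis using IH z ij pred by (auto simp: g_pt)
  qed
qed simp

text \<open>Conversely, lpp g i j is attained by an up-path following the larger predecessor.\<close>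
lemma up_path_attains:
  "i \<le> imax \<Longrightarrow> j \<le> jmax \<Longrightarrow> \<exists>\<pi>. \<pi> \<noteq> [] \<and> set \<pi> \<subseteq> rect a b c d \<and> hd \<pi> = pt 0 0 \<and>
     successively up_step \<pi> \<and> last \<pi> = pt i j \<and> sum_list (map \<xi> \<pi>) = lpp g i j"
proof (induction "i + j" arbitrary: i j rule: less_induct)
  case less
  have y: "pt i j \<in> rect a b c d" and gy: "g i j = \<xi> (pt i j)" using less pt_in_rect g_pt by auto
  have L: "0 \<le> lpp_left g i j" and B: "0 \<le> lpp_down g i j"
    using lpp_nonneg[OF g_nonneg] by (simp_all add: lpp_left_def lpp_down_def)
  have "(i = 0 \<and> j = 0) \<or> (0 < i \<and> lpp_down g i j \<le> lpp_left g i j) \<or> (0 < j \<and> lpp_left g i j \<le> lpp_down g i j)"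
    using L B by (cases "lpp_down g i j \<le> lpp_left g i j") (auto simp: lpp_left_def lpp_down_def)
  then consider (start) "i = 0" "j = 0" | (left) i' where "i = Suc i'" "lpp_down g i j \<le> lpp_left g i j"
    | (down) j' where "j = Suc j'" "lpp_left g i j \<le> lpp_down g i j"
    using gr0_conv_Suc by blast
  then show ?case
  proof cases
    case start
    then show ?thesis using y gy L B
      by (intro exI[of _ "[pt 0 0]"]) (simp add: lpp_rec[of g 0 0] lpp_left_def lpp_down_def)
  next
    case (left i')
    then obtain \<pi> where \<pi>: "\<pi> \<noteq> [] \<and> set \<pi> \<subseteq> rect a b c d \<and> hd \<pi> = pt 0 0 \<and> successively up_step \<pi> \<and>
        last \<pi> = pt i' j \<and> sum_list (map \<xi> \<pi>) = lpp g i' j" using less.hyps[of i' j] less.prems by auto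
    then have "successively up_step (\<pi> @ [pt i j])" using left up_step_pt by (simp add: successively_append_iff)
    moreover have "lpp g i j = lpp g i' j + \<xi> (pt i j)" using lpp_rec[of g i j] left gy by (simp add: lpp_left_def)
    ultimately show ?thesis using \<pi> y by (intro exI[of _ "\<pi> @ [pt i j]"]) auto
  next
    case (down j')
    then obtain \<pi> where \<pi>: "\<pi> \<noteq> [] \<and> set \<pi> \<subseteq> rect a b c d \<and> hd \<pi> = pt 0 0 \<and> successively up_step \<pi> \<and>
        last \<pi> = pt i j' \<and> sum_list (map \<xi> \<pi>) = lpp g i j'" using less.hyps[of i j'] less.prems by auto
    then have "successively up_step (\<pi> @ [pt i j])" using down up_step_pt by (simp add: successively_append_iff)
    moreover have "lpp g i j = lpp g i j' + \<xi> (pt i j)" using lpp_rec[of g i j] down gy by (simp add: lpp_down_def)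
    ultimately show ?thesis using \<pi> y by (intro exI[of _ "\<pi> @ [pt i j]"]) auto
  qed
qed

theorem G_S_lpp: "G_S (rect a b c d) \<xi> = lpp g imax jmax"
proof -
  let ?P = "up_paths (rect a b c d)"
  have P: "?P = {\<pi>. \<pi> \<noteq> [] \<and> set \<pi> \<subseteq> rect a b c d \<and> hd \<pi> = pt 0 0 \<and> last \<pi> = pt imax jmax \<and>
      successively up_step \<pi>}"
    unfolding up_paths_successively bottom_rect top_rect ..
  have "?P \<subseteq> {xs. set xs \<subseteq> rect a b c d \<and> length xs = imax + jmax + 1}"
    unfolding P using up_path_bound by blast
  then have "finite ?P" using finite_lists_length_eq[OF finite_rect] by (rule finite_subset)
  moreover have "\<And>\<pi>. \<pi> \<in> ?P \<Longrightarrow> sum_list (map \<xi> \<pi>) \<le> lpp g imax jmax" unfolding P using up_path_bound by blast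
  moreover have "lpp g imax jmax \<in> (\<lambda>\<pi>. sum_list (map \<xi> \<pi>)) ` ?P"
    using up_path_attains[of imax jmax] unfolding P by force
  ultimately show ?thesis unfolding G_S_def by (intro Max_eqI) auto
qed

text \<open>The total weight of the crossing traces is the inflow through the upper-left side,
  which telescopes to lpp g imax jmax.\<close>
theorem H_S_lpp: "H_S (rect a b c d) \<eta> \<xi> = lpp g imax jmax"
proof -
  have "H_S (rect a b c d) \<eta> \<xi> = (\<Sum>y\<in>(\<lambda>i. pt i jmax) ` {..imax}. \<eta> (e_se y))"
    using H_S_inflow se_exits_rect by simp
  also have "\<dots> = (\<Sum>i\<le>imax. \<eta> (e_se (pt i jmax)))"
    by (rule sum.reindex_cong[of "\<lambda>i. pt i jmax"]) (auto simp: inj_on_def pt_inj)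
  also have "\<dots> = (\<Sum>i\<le>imax. lpp g i jmax - lpp_left g i jmax)"
    using flow_is_lpp_gradient by (intro sum.cong) auto
  also have "\<dots> = lpp g imax jmax" by (rule lpp_telescope)
  finally show ?thesis .
qed

end

theorem mainTheorem11:
  fixes a b c d :: int and \<xi> :: "point \<Rightarrow> real" and \<eta> :: "edge \<Rightarrow> real"
  assumes "even a" "even b" "even c" "even d" "a \<le> b" "c \<le> d"
    and "\<forall>y\<in>rect a b c d. 0 \<le> \<xi> y"
    and "gen_flow (rect a b c d) \<xi> \<eta>"
  shows "G_S (rect a b c d) \<xi> = H_S (rect a b c d) \<eta> \<xi>"
proof -
  interpret rect_flow a b c d \<xi> \<eta> using assms by unfold_locales
  show ?thesis using G_S_lpp H_S_lpp by simp
qed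

end
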